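(* Let $r\ge4$ and $n\ge1$. Define $d=b_r$ if $r\le (1+2^n)^2/2^n$, and $d=1+2^n$ otherwise. For $i\in\{0,1,\dots,2^n-1\}$ let $X_i=(x_{j,i})_{j\ge1}$ with $x_{j,i}=d^{\,j+i/2^n}$. Then each $X_i$ has robustness at most $r$, and for every $T\ge d$, $$\frac{T}{\max_{0\le i\le 2^n-1}\ell(X_i,T)}\ \le\ \frac{d^{1+\frac{1}{2^n}}}{d-1}.$$ (That is, the scheme that uses an error-free $n$-bit prediction to select the best schedule among $X_0,\dots,X_{2^n-1}$ has robustness at most $r$ and consistency at most $d^{1+1/2^n}/(d-1)$.)
   Context: A schedule is an increasing sequence $X=(x_j)_{j\ge1}$ of positive reals (contract lengths), with completion times $S_j=\sum_{k=1}^j x_k$. For $T>0$, $\ell(X,T)=\max\{x_j: S_j\le T\}$ ($0$ if none). The robustness of $X$ is $\sup_{j\ge2}S_j/x_{j-1}$. For $r\ge4$, $b_r=\frac{r+\sqrt{r^2-4r}}{2}$. *)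

theory Defs
  imports "HOL-Analysis.Analysis"
begin

(* A schedule is a sequence x :: nat => real, used at indices j >= 1 (x 0 is ignored). *)

definition compl_time :: "(nat \<Rightarrow> real) \<Rightarrow> nat \<Rightarrow> real" where
  "compl_time x j = (\<Sum>k=1..j. x k)"

definition ell :: "(nat \<Rightarrow> real) \<Rightarrow> real \<Rightarrow> real" where
  "ell x T = (if \<exists>j\<ge>1. compl_time x j \<le> T
              then Max {x j | j. j \<ge> 1 \<and> compl_time x j \<le> T} else 0)"

definition robustness :: "(nat \<Rightarrow> real) \<Rightarrow> ereal" where
  "robustness x = (SUP j\<in>{2..}. ereal (compl_time x j / x (j - 1)))"

definition b_r :: "real \<Rightarrow> real" where
  "b_r r = (r + sqrt (r^2 - 4 * r)) / 2"

end

theory Submission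
  imports Defs
begin

text \<open>All schedules X_i are geometric with ratio d, so every completion time is at most
  d/(d-1) times the current contract and the robustness is at most d^2/(d-1), which the choice
  of d keeps below r. Together the X_i form the finer geometric grid d^(m/2^n): for T \<ge> d put
  c = T(d-1)/d and take the largest grid point v \<le> c. The contract of length v is completed
  by time v d/(d-1) \<le> T in the schedule containing it, and c < v d^(1/2^n) gives
  T/v < d^(1+1/2^n)/(d-1). If no grid point of the form d^(j+i/2^n), j \<ge> 1, lies below c,
  then T < d^2/(d-1) and the first contract d of X_0 already suffices.\<close>

lemma sum_power_le_geometric:
  fixes d :: real
  assumes "d > 1"
  shows "(\<Sum>k=1..j. d^k) \<le> d^(j+1) / (d-1)"
proof (induction j)
  case 0
  then show ?case using assms by simp
next
  case (Suc j)
  have "(\<Sum>k=1..Suc j. d^k) = (\<Sum>k=1..j. d^k) + d^(j+1)" by simp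
  also have "\<dots> \<le> d^(j+1) / (d-1) + d^(j+1)" using Suc by simp
  also have "\<dots> = d^(Suc j+1) / (d-1)" using assms by (simp add: field_simps)
  finally show ?case .
qed

lemma compl_time_geometric_le:
  fixes a d :: real
  assumes "a \<ge> 0" "d > 1"
  shows "compl_time (\<lambda>k. a * d^k) j \<le> a * d^j * d / (d-1)"
proof -
  have "compl_time (\<lambda>k. a * d^k) j = a * (\<Sum>k=1..j. d^k)"
    unfolding compl_time_def by (simp add: sum_distrib_left)
  also have "\<dots> \<le> a * (d^(j+1) / (d-1))"
    using assms by (intro mult_left_mono sum_power_le_geometric) auto
  finally show ?thesis by (simp add: mult_ac)
qed

lemma robustness_geometric_le:
  fixes a d :: real
  assumes "a > 0" "d > 1"
  shows "robustness (\<lambda>k. a * d^k) \<le> ereal (d^2 / (d-1))"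
  unfolding robustness_def
proof (rule SUP_least)
  fix j :: nat
  assume "j \<in> {2..}"
  then have j: "j = Suc (j-1)" by simp
  have prev_pos: "a * d^(j-1) > 0" using assms by simp
  have "compl_time (\<lambda>k. a * d^k) j \<le> a * d^j * d / (d-1)"
    using assms by (intro compl_time_geometric_le) auto
  also have "\<dots> = a * d^(j-1) * (d^2 / (d-1))"
    by (subst j) (simp add: power2_eq_square)
  finally show "ereal (compl_time (\<lambda>k. a * d^k) j / (a * d^(j-1))) \<le> ereal (d^2 / (d-1))"
    using prev_pos by (simp add: divide_le_eq mult.commute)
qed

lemma ell_ge:
  assumes "\<And>k. k \<ge> 1 \<Longrightarrow> x k \<ge> 1" "j \<ge> 1" "compl_time x j \<le> T"
  shows "x j \<le> ell x T"
proof -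
  let ?A = "{x k | k. k \<ge> 1 \<and> compl_time x k \<le> T}"
  have "real k \<le> compl_time x k" for k
  proof -
    have "(\<Sum>i=1..k. (1::real)) \<le> (\<Sum>i=1..k. x i)" using assms(1) by (intro sum_mono) simp
    then show ?thesis unfolding compl_time_def by simp
  qed
  then have "k \<le> nat \<lceil>T\<rceil>" if "compl_time x k \<le> T" for k
    using that \<open>real k \<le> compl_time x k\<close> by linarith
  then have "?A \<subseteq> x ` {..nat \<lceil>T\<rceil>}" by auto
  then have "finite ?A" by (rule finite_subset) simp
  moreover have "x j \<in> ?A" using assms by blast
  ultimately show ?thesis unfolding ell_def using assms by (auto intro: Max_ge)
qed

lemma b_r_ge_two:
  assumes "r \<ge> 4"
  shows "b_r r \<ge> 2"
proof -
  have "(r + s) / 2 \<ge> 2" if "s \<ge> 0" for s using that assms by simp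
  moreover have "sqrt (r^2 - 4*r) \<ge> 0" using assms by (simp add: power2_eq_square)
  ultimately show ?thesis unfolding b_r_def by blast
qed

lemma b_r_quadratic:
  assumes "r \<ge> 4"
  shows "(b_r r)^2 = r * (b_r r - 1)"
proof -
  have "(sqrt (r^2 - 4*r))^2 = r^2 - 4*r"
    using assms by (intro real_sqrt_pow2) (simp add: power2_eq_square)
  then show ?thesis unfolding b_r_def by (simp add: power2_eq_square field_simps)
qed

lemma base_choice_bounds:
  fixes r d N :: real
  assumes "r \<ge> 4" "N > 0" "d = (if r \<le> (1 + N)^2 / N then b_r r else 1 + N)"
  shows "d > 1" "d^2 / (d - 1) \<le> r"
proof -
  have "d > 1 \<and> d^2 / (d - 1) \<le> r"
  proof (cases "r \<le> (1 + N)^2 / N")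
    case True
    then have "d = b_r r" using assms(3) by simp
    then show ?thesis using b_r_ge_two[OF assms(1)] b_r_quadratic[OF assms(1)] by simp
  next
    case False
    then have "d = 1 + N" using assms(3) by simp
    then show ?thesis using False assms(2) by simp
  qed
  then show "d > 1" "d^2 / (d - 1) \<le> r" by auto
qed

lemma powr_add_nat_eq_geometric:
  fixes d a :: real
  assumes "d > 0"
  shows "(\<lambda>j. d powr (real j + a)) = (\<lambda>j. d powr a * d^j)"
  using assms by (simp add: powr_add powr_realpow mult.commute fun_eq_iff)

lemma powr_floor_bracket:
  fixes d c :: real and N :: nat
  assumes "d > 1" "N > 0" "c > 0"
  shows "\<exists>m::int. d powr (m / N) \<le> c \<and> c < d powr ((m + 1) / N)"
proof -
  define t where "t = log d c * N"
  have c_eq: "c = d powr (t / N)" unfolding t_def using assms by simp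
  have "d powr (\<lfloor>t\<rfloor> / N) \<le> d powr (t / N)"
    using assms by (intro powr_mono divide_right_mono) auto
  moreover have "d powr (t / N) < d powr ((\<lfloor>t\<rfloor> + 1) / N)"
    using assms by (intro powr_less_mono divide_strict_right_mono) auto
  ultimately show ?thesis unfolding c_eq by (intro exI[of _ "\<lfloor>t\<rfloor>"]) simp
qed

lemma divide_Max_le:
  fixes A :: "real set"
  assumes "finite A" "a \<in> A" "T > 0" "B \<ge> 0" "T \<le> B * a"
  shows "T / Max A \<le> B"
proof -
  have le: "T \<le> B * Max A"
    using assms by (meson Max_ge mult_left_mono order_trans)
  then have "B * Max A > 0" using assms(3) by linarith
  then have "Max A > 0" using assms(4) by (simp add: zero_less_mult_iff)
  with le show ?thesis by (simp add: pos_divide_le_eq mult.commute)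
qed

lemma ell_interleaved_geometric:
  fixes d T :: real and N :: nat and X :: "nat \<Rightarrow> nat \<Rightarrow> real"
  assumes d: "d > 1" and N: "N > 0" and T: "T \<ge> d"
    and X: "\<And>i j. X i j = d powr (real j + real i / N)"
  shows "\<exists>i<N. T \<le> d powr (1 + 1 / N) / (d - 1) * ell (X i) T"
proof -
  define B where "B = d powr (1 + 1 / N) / (d - 1)"
  have "B \<ge> 0" using d unfolding B_def by simp
  then have witness: "\<exists>i<N. T \<le> B * ell (X i) T"
    if "i < N" "j \<ge> 1" "compl_time (X i) j \<le> T" "T \<le> B * X i j" for i j
  proof -
    have "X i j \<le> ell (X i) T"
      using d by (intro ell_ge that(2,3)) (simp add: X ge_one_powr_ge_zero)
    then show ?thesis using that(1,4) \<open>B \<ge> 0\<close> by (meson mult_left_mono order_trans)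
  qed
  define c where "c = T * (d - 1) / d"
  have T_eq: "T = c * d / (d - 1)" using d unfolding c_def by simp
  obtain m :: int where m: "d powr (m / N) \<le> c" "c < d powr ((m + 1) / N)"
    using powr_floor_bracket[of d N c] d N T unfolding c_def by auto
  have "\<exists>i<N. T \<le> B * ell (X i) T"
  proof (cases "m \<ge> N")
    case True
    define j i where "j = nat m div N" and "i = nat m mod N"
    have "N \<le> nat m" using True by linarith
    then have "j \<ge> 1" using N unfolding j_def by (simp add: Suc_le_eq div_greater_zero_iff)
    have "real_of_int m = real j * N + real i"
      using True unfolding i_def j_def by (metis of_nat_add of_nat_mult div_mult_mod_eq nat_0_le
          of_int_of_nat_eq of_nat_0_le_iff order.trans)
    then have v: "X i j = d powr (m / N)" using N by (simp add: X field_simps)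
    have "X i = (\<lambda>k. d powr (i / N) * d^k)"
      using powr_add_nat_eq_geometric[of d "i / N"] d by (simp add: X fun_eq_iff)
    then have "compl_time (X i) j \<le> X i j * d / (d - 1)"
      using compl_time_geometric_le[of "d powr (i / N)" d j] d by simp
    also have "\<dots> \<le> T"
      unfolding T_eq using m(1) d by (simp add: v divide_right_mono)
    finally have "compl_time (X i) j \<le> T" .
    moreover have "T \<le> B * X i j"
    proof -
      have "d powr ((m + 1) / N) = X i j * d powr (1 / N)"
        by (simp add: v add_divide_distrib powr_add)
      then have "T \<le> X i j * d powr (1 / N) * d / (d - 1)"
        unfolding T_eq using m(2) d by (simp add: divide_right_mono)
      then show ?thesis using d unfolding B_def by (simp add: powr_add field_simps)
    qed
    moreover have "i < N" using N unfolding i_def by simp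
    ultimately show ?thesis using \<open>j \<ge> 1\<close> by (intro witness)
  next
    case False
    have "c < d powr ((m + 1) / N)" by (fact m(2))
    also have "\<dots> \<le> d" using False N d powr_mono[of "(m + 1) / N" 1 d] by simp
    finally have "T \<le> d / (d - 1) * d"
      unfolding T_eq using d by (simp add: divide_right_mono mult_right_mono)
    also have "\<dots> \<le> B * d"
      using d powr_mono[of 1 "1 + 1 / N" d] unfolding B_def
      by (simp add: divide_right_mono mult_right_mono)
    also have "d = X 0 1" using d by (simp add: X)
    finally show ?thesis using N T d by (intro witness[of 0 1]) (simp_all add: compl_time_def X)
  qed
  then show ?thesis unfolding B_def .
qed

theorem theorem3:
  fixes r :: real and n :: nat and d :: real and X :: "nat \<Rightarrow> nat \<Rightarrow> real"
  assumes "r \<ge> 4" and "n \<ge> 1"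
    and "d = (if r \<le> (1 + 2^n)^2 / 2^n then b_r r else 1 + 2^n)"
    and "\<And>i j. X i j = d powr (real j + real i / 2^n)"
  shows "(\<forall>i < 2^n. robustness (X i) \<le> ereal r) \<and>
         (\<forall>T \<ge> d. T / Max {ell (X i) T | i. i < 2^n} \<le> d powr (1 + 1 / 2^n) / (d - 1))"
proof -
  have d: "d > 1" "d^2 / (d - 1) \<le> r"
    using base_choice_bounds[of r "2^n" d] assms(1,3) by auto
  have "robustness (X i) \<le> ereal r" for i
  proof -
    have "X i = (\<lambda>k. d powr (i / 2^n) * d^k)"
      using powr_add_nat_eq_geometric[of d "i / 2^n"] d by (simp add: assms(4) fun_eq_iff)
    then have "robustness (X i) \<le> ereal (d^2 / (d - 1))"
      using robustness_geometric_le d by simp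
    also have "\<dots> \<le> ereal r" using d by simp
    finally show ?thesis .
  qed
  moreover have "T / Max {ell (X i) T | i. i < 2^n} \<le> d powr (1 + 1 / 2^n) / (d - 1)"
    if T: "T \<ge> d" for T
  proof -
    obtain i where "i < 2^n" "T \<le> d powr (1 + 1 / 2^n) / (d - 1) * ell (X i) T"
      using ell_interleaved_geometric[of d "2^n" T X] d T assms(4) by auto
    then show ?thesis using d T by (intro divide_Max_le) auto
  qed
  ultimately show ?thesis by blast
qed

end
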